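(* Let $1\le p\le\infty$ and suppose that either (i) $X=\big(\bigoplus_{n\in\mathbb N}X_n\big)_{\ell^p}$ where $\mathcal K(X_n)/\mathcal A(X_n)\ne\{0\}$ for every $n\in\mathbb N$, or (ii) $X$ is a Banach space with $\mathcal K(X)/\mathcal A(X)\ne\{0\}$ and $\big(\bigoplus_{\mathbb N}X\big)_{\ell^p}$ linearly isomorphic to $X$. (For $p=\infty$ the direct sums are $c_0$-direct sums with the supremum norm.) Then $\mathcal K(X)/\mathcal A(X)$ contains a linear isomorphic copy of $c_0$.
   Context: $\mathcal K(X)$ denotes the compact operators on the Banach space $X$, $\mathcal A(X)$ the norm closure of the bounded finite rank operators on $X$, and $\mathcal K(X)/\mathcal A(X)$ the quotient Banach algebra with the quotient norm. *)

theory Defs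
  imports "HOL-Analysis.Analysis"
begin

text \<open>A Banach space is represented as a closed linear subspace V of a real Banach type.
  Operators on V are functions that are linear and bounded on V and map V into V
  (their values outside V are irrelevant).\<close>

definition linear_on :: "'a::real_vector set \<Rightarrow> ('a \<Rightarrow> 'a) \<Rightarrow> bool" where
  "linear_on V T \<longleftrightarrow> (\<forall>x\<in>V. \<forall>y\<in>V. T (x + y) = T x + T y) \<and> (\<forall>c. \<forall>x\<in>V. T (c *\<^sub>R x) = c *\<^sub>R T x)"

definition bounded_op :: "'a::real_normed_vector set \<Rightarrow> ('a \<Rightarrow> 'a) \<Rightarrow> bool" where
  "bounded_op V T \<longleftrightarrow> linear_on V T \<and> T ` V \<subseteq> V \<and> (\<exists>K. \<forall>x\<in>V. norm (T x) \<le> K * norm x)"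

definition opnorm :: "'a::real_normed_vector set \<Rightarrow> ('a \<Rightarrow> 'a) \<Rightarrow> real" where
  "opnorm V T = Sup ((\<lambda>x. norm (T x)) ` {x\<in>V. norm x \<le> 1})"

definition compact_op :: "'a::real_normed_vector set \<Rightarrow> ('a \<Rightarrow> 'a) \<Rightarrow> bool" where
  "compact_op V T \<longleftrightarrow> bounded_op V T \<and> compact (closure (T ` {x\<in>V. norm x \<le> 1}))"

definition finite_rank_op :: "'a::real_normed_vector set \<Rightarrow> ('a \<Rightarrow> 'a) \<Rightarrow> bool" where
  "finite_rank_op V T \<longleftrightarrow> bounded_op V T \<and> (\<exists>B. finite B \<and> T ` V \<subseteq> span B)"

definition approximable_op :: "'a::real_normed_vector set \<Rightarrow> ('a \<Rightarrow> 'a) \<Rightarrow> bool" where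
  "approximable_op V T \<longleftrightarrow> bounded_op V T \<and>
     (\<forall>e>0. \<exists>F. finite_rank_op V F \<and> opnorm V (\<lambda>x. T x - F x) < e)"

definition KA_nontrivial :: "'a::real_normed_vector set \<Rightarrow> bool" where
  "KA_nontrivial V \<longleftrightarrow> (\<exists>T. compact_op V T \<and> \<not> approximable_op V T)"

definition quot_norm :: "'a::real_normed_vector set \<Rightarrow> ('a \<Rightarrow> 'a) \<Rightarrow> real" where
  "quot_norm V T = Inf {opnorm V (\<lambda>x. T x - R x) | R. approximable_op V R}"

definition c0 :: "(nat \<Rightarrow> real) set" where
  "c0 = {a. a \<longlonglongrightarrow> 0}"

definition sup_norm :: "(nat \<Rightarrow> real) \<Rightarrow> real" where
  "sup_norm a = Sup (range (\<lambda>n. \<bar>a n\<bar>))"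

text \<open>\<open>\<K>(V)/\<A>(V)\<close> contains a linear isomorphic copy of \<open>c\<^sub>0\<close>: there is a map J from
  \<open>c\<^sub>0\<close> into \<open>\<K>(V)\<close> which is linear modulo \<open>\<A>(V)\<close> (i.e. linear as a map into the
  quotient) and is bounded above and below with respect to the quotient norm.\<close>
definition KA_contains_c0 :: "'a::real_normed_vector set \<Rightarrow> bool" where
  "KA_contains_c0 V \<longleftrightarrow> (\<exists>(J :: (nat \<Rightarrow> real) \<Rightarrow> 'a \<Rightarrow> 'a) c C. 0 < c \<and>
     (\<forall>a\<in>c0. compact_op V (J a)) \<and>
     (\<forall>a\<in>c0. \<forall>b\<in>c0. \<forall>\<alpha> \<beta>.
        approximable_op V (\<lambda>x. J (\<lambda>n. \<alpha> * a n + \<beta> * b n) x - (\<alpha> *\<^sub>R J a x + \<beta> *\<^sub>R J b x))) \<and>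
     (\<forall>a\<in>c0. c * sup_norm a \<le> quot_norm V (J a) \<and> quot_norm V (J a) \<le> C * sup_norm a))"

definition lp_sum :: "ereal \<Rightarrow> (nat \<Rightarrow> 'b::real_normed_vector set) \<Rightarrow> (nat \<Rightarrow> 'b) set" where
  "lp_sum p Vs = {f. (\<forall>n. f n \<in> Vs n) \<and>
     (if p = \<infinity> then (\<lambda>n. norm (f n)) \<longlonglongrightarrow> 0
      else summable (\<lambda>n. norm (f n) powr real_of_ereal p))}"

definition lp_sum_norm :: "ereal \<Rightarrow> (nat \<Rightarrow> 'b::real_normed_vector) \<Rightarrow> real" where
  "lp_sum_norm p f = (if p = \<infinity> then Sup (range (\<lambda>n. norm (f n)))
     else (\<Sum>n. norm (f n) powr real_of_ereal p) powr (1 / real_of_ereal p))"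

definition lin_bij_to_lp_sum :: "ereal \<Rightarrow> (nat \<Rightarrow> 'b::real_normed_vector set) \<Rightarrow> ('a::real_normed_vector \<Rightarrow> nat \<Rightarrow> 'b) \<Rightarrow> bool" where
  "lin_bij_to_lp_sum p Vs U \<longleftrightarrow> bij_betw U UNIV (lp_sum p Vs) \<and>
     (\<forall>x y. U (x + y) = (\<lambda>n. U x n + U y n)) \<and> (\<forall>c x. U (c *\<^sub>R x) = (\<lambda>n. c *\<^sub>R U x n))"

definition isometric_to_lp_sum :: "'a::real_normed_vector itself \<Rightarrow> ereal \<Rightarrow> (nat \<Rightarrow> 'b::real_normed_vector set) \<Rightarrow> bool" where
  "isometric_to_lp_sum _ p Vs \<longleftrightarrow> (\<exists>U :: 'a \<Rightarrow> nat \<Rightarrow> 'b. lin_bij_to_lp_sum p Vs U \<and> (\<forall>x. lp_sum_norm p (U x) = norm x))"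

definition isomorphic_to_lp_sum :: "'a::real_normed_vector itself \<Rightarrow> ereal \<Rightarrow> (nat \<Rightarrow> 'b::real_normed_vector set) \<Rightarrow> bool" where
  "isomorphic_to_lp_sum _ p Vs \<longleftrightarrow> (\<exists>(U :: 'a \<Rightarrow> nat \<Rightarrow> 'b) c C. lin_bij_to_lp_sum p Vs U \<and> 0 < c \<and>
     (\<forall>x. c * norm x \<le> lp_sum_norm p (U x) \<and> lp_sum_norm p (U x) \<le> C * norm x))"

end

(*
  Each summand X_n carries an operator T_n with norm at most 2 whose image of the unit ball
  is totally bounded and whose distance to the finite-rank operators is at least 1: take a compact,
  non-approximable operator, subtract a nearly optimal finite-rank approximation and divide by
  the distance d > 0 to the finite-rank operators.  For a in c_0 the diagonal operator
  J(a) = (a_n T_n)_n on X is a norm limit of finite sums of compact operators, hence compact,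
  it depends linearly on a, and ||J(a)|| <= 2 C/c sup |a_n| (c, C the isomorphism constants).
  Conversely, for every approximable R, compressing J(a) - R to the n-th summand gives
  a_n T_n minus an approximable operator on X_n, so c |a_n| <= C ||J(a) - R||.  In case (ii) all summands are X itself.
*)
theory Submission
  imports Defs
begin

abbreviation totally_bounded :: "'a::metric_space set \<Rightarrow> bool" where
  "totally_bounded \<equiv> Met_TC.mtotally_bounded"

abbreviation cball_in :: "'a::real_normed_vector set \<Rightarrow> real \<Rightarrow> 'a set" where
  "cball_in V r \<equiv> {x\<in>V. norm x \<le> r}"

section \<open>Totally bounded sets\<close>

lemma totally_boundedE:
  assumes "totally_bounded S" "e > 0"
  obtains K where "finite K" "K \<subseteq> S" "S \<subseteq> (\<Union>x\<in>K. ball x e)"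
proof -
  from assms obtain K where "finite K" "K \<subseteq> S" "S \<subseteq> (\<Union>x\<in>K. Met_TC.mball x e)"
    unfolding Met_TC.mtotally_bounded_def by meson
  then show thesis using that by simp
qed

lemma totally_boundedI_finite_cover:
  assumes "\<And>e. e > 0 \<Longrightarrow> \<exists>K. finite K \<and> S \<subseteq> (\<Union>x\<in>K. ball x e)"
  shows "totally_bounded S"
  unfolding Met_TC.mtotally_bounded_def mball_eq_ball
proof (intro allI impI)
  fix e :: real assume "e > 0"
  then obtain K where K: "finite K" "S \<subseteq> (\<Union>x\<in>K. ball x (e/2))"
    using assms[of "e/2"] by auto
  define near where "near x = (SOME y. y \<in> S \<and> dist x y < e/2)" for x
  let ?K = "near ` {x\<in>K. \<exists>y\<in>S. dist x y < e/2}"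
  have near: "near x \<in> S" "dist x (near x) < e/2" if "\<exists>y\<in>S. dist x y < e/2" for x
    using someI_ex[OF that[unfolded Bex_def]] unfolding near_def by blast+
  show "\<exists>K. finite K \<and> K \<subseteq> S \<and> S \<subseteq> (\<Union>x\<in>K. ball x e)"
  proof (intro exI conjI)
    show "finite ?K" "?K \<subseteq> S" using K(1) near by auto
    show "S \<subseteq> (\<Union>x\<in>?K. ball x e)"
    proof
      fix y assume "y \<in> S"
      then obtain x where x: "x \<in> K" "dist x y < e/2" using K(2) by auto
      then have "dist (near x) y < e" using near \<open>y \<in> S\<close> by (meson dist_triangle_half_r)
      then show "y \<in> (\<Union>x\<in>?K. ball x e)" using x \<open>y \<in> S\<close> by auto
    qed
  qed
qed

lemma totally_bounded_iff_compact_closure: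
  fixes S :: "'a::complete_space set"
  shows "totally_bounded S \<longleftrightarrow> compact (closure S)"
  using Met_TC.mtotally_bounded_eq_compact_closure_of[of S] complete_UNIV by simp

lemma totally_bounded_Lipschitz_image:
  assumes S: "totally_bounded S"
    and Lipschitz: "\<And>x y. x \<in> S \<Longrightarrow> y \<in> S \<Longrightarrow> dist (f x) (f y) \<le> L * dist x y"
  shows "totally_bounded (f ` S)"
proof (rule totally_boundedI_finite_cover)
  fix e :: real assume "e > 0"
  then have "e / (\<bar>L\<bar> + 1) > 0" by simp
  then obtain K where K: "finite K" "K \<subseteq> S" "S \<subseteq> (\<Union>x\<in>K. ball x (e / (\<bar>L\<bar> + 1)))"
    using totally_boundedE[OF S] by blast
  have "f ` S \<subseteq> (\<Union>x\<in>f ` K. ball x e)"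
  proof
    fix z assume "z \<in> f ` S"
    then obtain y where y: "y \<in> S" "z = f y" by blast
    then obtain x where x: "x \<in> K" "dist x y < e / (\<bar>L\<bar> + 1)" using K(3) by auto
    have "dist (f x) (f y) \<le> L * dist x y" using Lipschitz K(2) x(1) y(1) by blast
    also have "\<dots> \<le> (\<bar>L\<bar> + 1) * dist x y" by (intro mult_right_mono) auto
    also have "\<dots> < e" using x(2) by (simp add: field_simps)
    finally show "z \<in> (\<Union>x\<in>f ` K. ball x e)" using x(1) y(2) by auto
  qed
  then show "\<exists>K. finite K \<and> f ` S \<subseteq> (\<Union>x\<in>K. ball x e)"
    using K(1) by (intro exI[of _ "f ` K"]) simp
qed

lemma totally_bounded_image_add:
  fixes f g :: "'a \<Rightarrow> 'b::real_normed_vector"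
  assumes f: "totally_bounded (f ` A)" and g: "totally_bounded (g ` A)"
  shows "totally_bounded ((\<lambda>x. f x + g x) ` A)"
proof (rule totally_boundedI_finite_cover)
  fix e :: real assume "e > 0"
  then obtain Kf Kg where Kf: "finite Kf" "f ` A \<subseteq> (\<Union>u\<in>Kf. ball u (e/2))"
    and Kg: "finite Kg" "g ` A \<subseteq> (\<Union>v\<in>Kg. ball v (e/2))"
    using f g by (metis half_gt_zero totally_boundedE)
  let ?K = "(\<lambda>(u, v). u + v) ` (Kf \<times> Kg)"
  have "(\<lambda>x. f x + g x) ` A \<subseteq> (\<Union>k\<in>?K. ball k e)"
  proof
    fix z assume "z \<in> (\<lambda>x. f x + g x) ` A"
    then obtain x where x: "x \<in> A" "z = f x + g x" by blast
    obtain u v where uv: "u \<in> Kf" "dist u (f x) < e/2" "v \<in> Kg" "dist v (g x) < e/2"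
      using Kf(2) Kg(2) x(1) by fastforce
    have "dist (u + v) z \<le> dist u (f x) + dist v (g x)"
      unfolding x(2) by (rule dist_triangle_add)
    then show "z \<in> (\<Union>k\<in>?K. ball k e)" using uv by (intro UN_I[of "u + v"]) auto
  qed
  then show "\<exists>K. finite K \<and> (\<lambda>x. f x + g x) ` A \<subseteq> (\<Union>x\<in>K. ball x e)"
    using Kf(1) Kg(1) by (intro exI[of _ ?K]) simp
qed

lemma totally_bounded_image_scaleR:
  fixes f :: "'a \<Rightarrow> 'b::real_normed_vector"
  assumes "totally_bounded (f ` A)"
  shows "totally_bounded ((\<lambda>x. r *\<^sub>R f x) ` A)"
proof -
  have "totally_bounded ((\<lambda>z. r *\<^sub>R z) ` f ` A)"
    by (rule totally_bounded_Lipschitz_image[OF assms, of _ "\<bar>r\<bar>"])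
      (simp add: dist_norm flip: scaleR_diff_right)
  then show ?thesis by (simp add: image_image)
qed

lemma totally_bounded_image_diff:
  fixes f g :: "'a \<Rightarrow> 'b::real_normed_vector"
  assumes "totally_bounded (f ` A)" "totally_bounded (g ` A)"
  shows "totally_bounded ((\<lambda>x. f x - g x) ` A)"
  using totally_bounded_image_add[OF assms(1) totally_bounded_image_scaleR[OF assms(2), of "-1"]]
  by simp

lemma totally_bounded_uniform_limit:
  assumes "\<And>e. e > 0 \<Longrightarrow> \<exists>g. totally_bounded (g ` A) \<and> (\<forall>x\<in>A. dist (f x) (g x) < e)"
  shows "totally_bounded (f ` A)"
proof (rule totally_boundedI_finite_cover)
  fix e :: real assume "e > 0"
  then obtain g where g: "totally_bounded (g ` A)" "\<forall>x\<in>A. dist (f x) (g x) < e/2"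
    using assms[of "e/2"] by auto
  then obtain K where K: "finite K" "g ` A \<subseteq> (\<Union>k\<in>K. ball k (e/2))"
    using \<open>e > 0\<close> by (metis half_gt_zero totally_boundedE)
  have "f ` A \<subseteq> (\<Union>k\<in>K. ball k e)"
  proof
    fix z assume "z \<in> f ` A"
    then obtain x where x: "x \<in> A" "z = f x" by blast
    then obtain k where k: "k \<in> K" "dist k (g x) < e/2" using K(2) by fastforce
    have "dist k z < e"
      using dist_triangle_half_l[OF k(2), of "f x"] g(2) x by simp
    then show "z \<in> (\<Union>k\<in>K. ball k e)" using k(1) by auto
  qed
  then show "\<exists>K. finite K \<and> f ` A \<subseteq> (\<Union>k\<in>K. ball k e)"
    using K(1) by (intro exI[of _ K]) simp
qed

section \<open>Bounded subsets of finite-dimensional spans\<close>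

lemma span_insert_eq: "span (insert b S) = {t *\<^sub>R b + v | t v. v \<in> span S}"
proof (intro set_eqI iffI)
  fix x assume "x \<in> span (insert b S)"
  then obtain t where "x - t *\<^sub>R b \<in> span S" unfolding span_insert by blast
  then show "x \<in> {t *\<^sub>R b + v | t v. v \<in> span S}"
    by (intro CollectI exI[of _ t] exI[of _ "x - t *\<^sub>R b"]) simp
next
  fix x assume "x \<in> {t *\<^sub>R b + v | t v. v \<in> span S}"
  then obtain t v where "x = t *\<^sub>R b + v" "v \<in> span S" by blast
  then show "x \<in> span (insert b S)" unfolding span_insert by (intro CollectI exI[of _ t]) simp
qed

lemma span_insert_norm_lower_bound:
  fixes b :: "'a::real_normed_vector"
  assumes "closed (span S)" "b \<notin> span S"
  obtains d where "d > 0" "\<And>t v. v \<in> span S \<Longrightarrow> \<bar>t\<bar> * d \<le> norm (t *\<^sub>R b + v)"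
proof
  show d: "infdist b (span S) > 0"
    using assms span_zero by (blast intro: infdist_pos_not_in_closed)
  fix t and v assume v: "v \<in> span S"
  show "\<bar>t\<bar> * infdist b (span S) \<le> norm (t *\<^sub>R b + v)"
  proof (cases "t = 0")
    case False
    have "infdist b (span S) \<le> dist b ((- 1 / t) *\<^sub>R v)"
      using v by (intro infdist_le span_mul)
    also have "\<dots> = norm (b + (1/t) *\<^sub>R v)" by (simp add: dist_norm)
    also have "\<dots> = norm (t *\<^sub>R b + v) / \<bar>t\<bar>"
    proof -
      have "t *\<^sub>R b + v = t *\<^sub>R (b + (1/t) *\<^sub>R v)" using False by (simp add: scaleR_add_right)
      then show ?thesis using False by simp
    qed
    finally show ?thesis using False by (simp add: field_simps)
  qed simp
qed

lemma closed_span_insert: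
  fixes b :: "'a::banach"
  assumes closed: "closed (span S)"
  shows "closed (span (insert b S))"
proof (cases "b \<in> span S")
  case True
  then show ?thesis using closed by (simp add: span_redundant)
next
  case False
  then obtain d where d: "d > 0" "\<And>t v. v \<in> span S \<Longrightarrow> \<bar>t\<bar> * d \<le> norm (t *\<^sub>R b + v)"
    using span_insert_norm_lower_bound[OF closed] by blast
  show ?thesis
    unfolding closed_sequential_limits
  proof (intro allI impI, elim conjE)
    fix x l assume x: "\<forall>n. x n \<in> span (insert b S)" and "x \<longlonglongrightarrow> l"
    then have "\<forall>n. \<exists>t v. v \<in> span S \<and> x n = t *\<^sub>R b + v" unfolding span_insert_eq by blast
    then obtain t v where tv: "\<And>n. v n \<in> span S" "\<And>n. x n = t n *\<^sub>R b + v n" by metis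
    have "Cauchy t"
    proof (rule CauchyI)
      fix e :: real assume "e > 0"
      then obtain M where M: "\<forall>m\<ge>M. \<forall>n\<ge>M. norm (x m - x n) < e * d"
        using CauchyD[OF LIMSEQ_imp_Cauchy[OF \<open>x \<longlonglongrightarrow> l\<close>], of "e * d"] d(1) by auto
      show "\<exists>M. \<forall>m\<ge>M. \<forall>n\<ge>M. norm (t m - t n) < e"
      proof (intro exI allI impI)
        fix m n assume "m \<ge> M" "n \<ge> M"
        have "x m - x n = (t m - t n) *\<^sub>R b + (v m - v n)"
          using tv(2)[of m] tv(2)[of n] by (simp add: algebra_simps)
        then have "\<bar>t m - t n\<bar> * d \<le> norm (x m - x n)" using d(2) tv(1) span_diff by metis
        also have "\<dots> < e * d" using M \<open>m \<ge> M\<close> \<open>n \<ge> M\<close> by auto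
        finally show "norm (t m - t n) < e" using d(1) by simp
      qed
    qed
    then obtain \<tau> where "t \<longlonglongrightarrow> \<tau>" using Cauchy_convergent_iff convergent_def by blast
    then have lim: "(\<lambda>n. x n - t n *\<^sub>R b) \<longlonglongrightarrow> l - \<tau> *\<^sub>R b"
      using \<open>x \<longlonglongrightarrow> l\<close> by (intro tendsto_intros)
    have "\<And>n. x n - t n *\<^sub>R b \<in> span S" using tv by simp
    then have "l - \<tau> *\<^sub>R b \<in> span S" using closed_sequentially[OF closed _ lim] by blast
    then show "l \<in> span (insert b S)" unfolding span_insert by blast
  qed
qed

lemma closed_span_finite:
  fixes B :: "'a::banach set"
  shows "finite B \<Longrightarrow> closed (span B)"
  by (induction B rule: finite_induct) (simp_all add: closed_span_insert)

lemma totally_bounded_span_insert: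
  fixes b :: "'a::banach"
  assumes closed: "closed (span S)" and tb: "\<And>M. totally_bounded (span S \<inter> cball 0 M)"
  shows "totally_bounded (span (insert b S) \<inter> cball 0 M)"
proof (cases "b \<in> span S")
  case True
  then show ?thesis using tb by (simp add: span_redundant)
next
  case False
  then obtain d where d: "d > 0" "\<And>t v. v \<in> span S \<Longrightarrow> \<bar>t\<bar> * d \<le> norm (t *\<^sub>R b + v)"
    using span_insert_norm_lower_bound[OF closed] by blast
  define M1 where "M1 = \<bar>M\<bar> / d"
  define M2 where "M2 = \<bar>M\<bar> + M1 * norm b"
  define A where "A = cball (0::real) M1 \<times> (span S \<inter> cball 0 M2)"
  have "totally_bounded ((\<lambda>t. t *\<^sub>R b) ` cball 0 M1)"
    by (rule totally_bounded_Lipschitz_image[of _ _ "norm b"])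
      (auto simp: totally_bounded_iff_compact_closure dist_real_def)
  moreover have "(\<lambda>(t, v). t *\<^sub>R b) ` A \<subseteq> (\<lambda>t. t *\<^sub>R b) ` cball 0 M1"
    unfolding A_def image_subset_iff by auto
  ultimately have "totally_bounded ((\<lambda>(t, v). t *\<^sub>R b) ` A)"
    by (rule Met_TC.mtotally_bounded_subset)
  moreover have "snd ` A \<subseteq> span S \<inter> cball 0 M2"
    unfolding A_def by auto
  then have "totally_bounded (snd ` A)"
    by (rule Met_TC.mtotally_bounded_subset[OF tb])
  ultimately have "totally_bounded ((\<lambda>(t, v). t *\<^sub>R b + v) ` A)"
    using totally_bounded_image_add[of "\<lambda>(t, v). t *\<^sub>R b" A snd] by (simp add: case_prod_beta)
  moreover have "span (insert b S) \<inter> cball 0 M \<subseteq> (\<lambda>(t, v). t *\<^sub>R b + v) ` A"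
  proof
    fix x assume x: "x \<in> span (insert b S) \<inter> cball 0 M"
    then obtain t v where tv: "x = t *\<^sub>R b + v" "v \<in> span S" unfolding span_insert_eq by blast
    have "\<bar>t\<bar> * d \<le> \<bar>M\<bar>" using d(2)[OF tv(2), of t] tv(1) x by auto
    then have t: "t \<in> cball 0 M1" unfolding M1_def using d(1) by (simp add: field_simps)
    have "norm v \<le> norm x + \<bar>t\<bar> * norm b"
      using tv(1) norm_triangle_ineq4[of x "t *\<^sub>R b"] by simp
    also have "\<dots> \<le> M2" unfolding M2_def using x t by (intro add_mono mult_right_mono) auto
    finally have "(t, v) \<in> A" using tv(2) t unfolding A_def by simp
    then show "x \<in> (\<lambda>(t, v). t *\<^sub>R b + v) ` A" using tv(1) by force
  qed
  ultimately show ?thesis by (rule Met_TC.mtotally_bounded_subset)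
qed

lemma totally_bounded_span_finite:
  fixes B :: "'a::banach set"
  shows "finite B \<Longrightarrow> totally_bounded (span B \<inter> cball 0 M)"
proof (induction B arbitrary: M rule: finite_induct)
  case empty
  show ?case by (rule Met_TC.mtotally_bounded_subset[of "{0}"]) auto
next
  case (insert b B)
  show ?case by (rule totally_bounded_span_insert[OF closed_span_finite[OF insert.hyps(1)] insert.IH])
qed

section \<open>Operators on a subspace\<close>

lemma bounded_opE:
  assumes "bounded_op V T"
  obtains K where "K \<ge> 0" "\<And>x. x \<in> V \<Longrightarrow> norm (T x) \<le> K * norm x"
proof -
  obtain K where K: "\<forall>x\<in>V. norm (T x) \<le> K * norm x" using assms unfolding bounded_op_def by blast
  have "norm (T x) \<le> max K 0 * norm x" if "x \<in> V" for x
    using K that by (metis max.cobounded1 mult_right_mono norm_ge_zero order_trans)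
  then show thesis using that[of "max K 0"] by simp
qed

lemma linear_on_zero: "linear_on V T \<Longrightarrow> 0 \<in> V \<Longrightarrow> T 0 = 0"
  unfolding linear_on_def by (metis scaleR_zero_left)

lemma bounded_op_add:
  assumes V: "subspace V" and S: "bounded_op V S" and T: "bounded_op V T"
  shows "bounded_op V (\<lambda>x. S x + T x)"
proof -
  obtain K1 K2 where "\<And>x. x \<in> V \<Longrightarrow> norm (S x) \<le> K1 * norm x"
    and "\<And>x. x \<in> V \<Longrightarrow> norm (T x) \<le> K2 * norm x"
    using bounded_opE[OF S] bounded_opE[OF T] by metis
  then have "\<forall>x\<in>V. norm (S x + T x) \<le> (K1 + K2) * norm x"
    by (metis distrib_right norm_triangle_le add_mono)
  moreover have "linear_on V (\<lambda>x. S x + T x)"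
    using S T unfolding bounded_op_def linear_on_def by (simp add: algebra_simps)
  moreover have "(\<lambda>x. S x + T x) ` V \<subseteq> V"
    using S T V unfolding bounded_op_def by (auto intro!: subspace_add)
  ultimately show ?thesis unfolding bounded_op_def by blast
qed

lemma bounded_op_scaleR:
  assumes V: "subspace V" and T: "bounded_op V T"
  shows "bounded_op V (\<lambda>x. c *\<^sub>R T x)"
proof -
  obtain K where "\<And>x. x \<in> V \<Longrightarrow> norm (T x) \<le> K * norm x" using bounded_opE[OF T] by blast
  then have "\<forall>x\<in>V. norm (c *\<^sub>R T x) \<le> (\<bar>c\<bar> * K) * norm x"
    by (simp add: mult.assoc mult_left_mono)
  moreover have "linear_on V (\<lambda>x. c *\<^sub>R T x)"
    using T unfolding bounded_op_def linear_on_def by (simp add: algebra_simps)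
  moreover have "(\<lambda>x. c *\<^sub>R T x) ` V \<subseteq> V"
    using T V unfolding bounded_op_def by (auto intro!: subspace_scale)
  ultimately show ?thesis unfolding bounded_op_def by blast
qed

lemma bounded_op_diff:
  assumes "subspace V" "bounded_op V S" "bounded_op V T"
  shows "bounded_op V (\<lambda>x. S x - T x)"
  using bounded_op_add[OF assms(1,2) bounded_op_scaleR[OF assms(1,3), of "-1"]] by simp

lemma bounded_op_zero: "subspace V \<Longrightarrow> bounded_op V (\<lambda>x. 0)"
  unfolding bounded_op_def linear_on_def by (auto simp: subspace_0 intro!: exI[of _ 0])

lemma opnorm_upper:
  assumes T: "bounded_op V T" and x: "x \<in> V" "norm x \<le> 1"
  shows "norm (T x) \<le> opnorm V T"
proof -
  obtain K where K: "K \<ge> 0" "\<And>x. x \<in> V \<Longrightarrow> norm (T x) \<le> K * norm x"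
    using bounded_opE[OF T] by blast
  have "norm (T y) \<le> K" if "y \<in> cball_in V 1" for y
  proof -
    have "K * norm y \<le> K" using that K(1) by (simp add: mult_left_le)
    then show ?thesis using K(2)[of y] that by simp
  qed
  then have "bdd_above ((\<lambda>x. norm (T x)) ` cball_in V 1)" by (intro bdd_aboveI2)
  then show ?thesis unfolding opnorm_def using x by (intro cSup_upper) auto
qed

lemma opnorm_least:
  assumes "0 \<in> V" "\<And>x. x \<in> V \<Longrightarrow> norm x \<le> 1 \<Longrightarrow> norm (T x) \<le> M"
  shows "opnorm V T \<le> M"
  unfolding opnorm_def using assms by (intro cSup_least) auto

lemma opnorm_nonneg: "bounded_op V T \<Longrightarrow> 0 \<in> V \<Longrightarrow> 0 \<le> opnorm V T"
  by (metis norm_ge_zero norm_zero opnorm_upper order_trans zero_le_one)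

lemma norm_le_opnorm:
  assumes V: "subspace V" and T: "bounded_op V T" and x: "x \<in> V"
  shows "norm (T x) \<le> opnorm V T * norm x"
proof (cases "x = 0")
  case True
  then show ?thesis
    using T linear_on_zero subspace_0[OF V] unfolding bounded_op_def by fastforce
next
  case False
  have "(1 / norm x) *\<^sub>R x \<in> V" using V x by (rule subspace_scale)
  then have "norm (T ((1 / norm x) *\<^sub>R x)) \<le> opnorm V T"
    using False by (intro opnorm_upper[OF T]) auto
  moreover have "T ((1 / norm x) *\<^sub>R x) = (1 / norm x) *\<^sub>R T x"
    using T x unfolding bounded_op_def linear_on_def by blast
  ultimately show ?thesis using False by (simp add: field_simps)
qed

lemma opnorm_diff_triangle:
  assumes V: "subspace V" and S: "bounded_op V S" and R: "bounded_op V R" and T: "bounded_op V T"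
  shows "opnorm V (\<lambda>x. S x - T x) \<le> opnorm V (\<lambda>x. S x - R x) + opnorm V (\<lambda>x. R x - T x)"
proof (rule opnorm_least)
  show "0 \<in> V" using V by (rule subspace_0)
  fix x assume x: "x \<in> V" "norm x \<le> 1"
  have "norm (S x - T x) \<le> norm (S x - R x) + norm (R x - T x)"
    using norm_triangle_ineq[of "S x - R x" "R x - T x"] by simp
  also have "\<dots> \<le> opnorm V (\<lambda>x. S x - R x) + opnorm V (\<lambda>x. R x - T x)"
    using x by (intro add_mono opnorm_upper bounded_op_diff V S R T)
  finally show "norm (S x - T x) \<le> opnorm V (\<lambda>x. S x - R x) + opnorm V (\<lambda>x. R x - T x)" .
qed

lemma finite_rank_op_zero: "subspace V \<Longrightarrow> finite_rank_op V (\<lambda>x. 0)"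
  unfolding finite_rank_op_def using bounded_op_zero by (auto intro!: exI[of _ "{}"])

lemma finite_rank_op_add:
  assumes V: "subspace V" and F: "finite_rank_op V F" and G: "finite_rank_op V G"
  shows "finite_rank_op V (\<lambda>x. F x + G x)"
proof -
  obtain BF BG where B: "finite BF" "F ` V \<subseteq> span BF" "finite BG" "G ` V \<subseteq> span BG"
    using F G unfolding finite_rank_op_def by blast
  have "(\<lambda>x. F x + G x) ` V \<subseteq> span (BF \<union> BG)"
  proof (rule image_subsetI)
    fix x assume "x \<in> V"
    then have "F x \<in> span (BF \<union> BG)" "G x \<in> span (BF \<union> BG)"
      using B span_mono[of BF "BF \<union> BG"] span_mono[of BG "BF \<union> BG"] by blast+
    then show "F x + G x \<in> span (BF \<union> BG)" by (rule span_add)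
  qed
  then show ?thesis
    using B bounded_op_add[OF V] F G unfolding finite_rank_op_def by (metis finite_UnI)
qed

lemma finite_rank_op_scaleR:
  assumes V: "subspace V" and F: "finite_rank_op V F"
  shows "finite_rank_op V (\<lambda>x. c *\<^sub>R F x)"
proof -
  obtain B where B: "finite B" "F ` V \<subseteq> span B" using F unfolding finite_rank_op_def by blast
  then have "(\<lambda>x. c *\<^sub>R F x) ` V \<subseteq> span B" by (auto intro: span_mul)
  then show ?thesis using B bounded_op_scaleR[OF V] F unfolding finite_rank_op_def by metis
qed

lemma finite_rank_op_bounded: "finite_rank_op V F \<Longrightarrow> bounded_op V F"
  unfolding finite_rank_op_def by blast

lemma approximable_op_bounded: "approximable_op V R \<Longrightarrow> bounded_op V R"
  unfolding approximable_op_def by blast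

lemma totally_bounded_finite_rank_image:
  fixes F :: "'a::banach \<Rightarrow> 'a"
  assumes "finite_rank_op V F"
  shows "totally_bounded (F ` cball_in V 1)"
proof -
  obtain B K where B: "finite B" "F ` V \<subseteq> span B"
    and K: "K \<ge> 0" "\<And>x. x \<in> V \<Longrightarrow> norm (F x) \<le> K * norm x"
    using assms bounded_opE unfolding finite_rank_op_def by metis
  have "F ` cball_in V 1 \<subseteq> span B \<inter> cball 0 K"
  proof (rule image_subsetI)
    fix x assume x: "x \<in> cball_in V 1"
    then have "K * norm x \<le> K" using K(1) by (simp add: mult_left_le)
    then show "F x \<in> span B \<inter> cball 0 K" using K(2)[of x] B(2) x by auto
  qed
  then show ?thesis by (rule Met_TC.mtotally_bounded_subset[OF totally_bounded_span_finite[OF B(1)]])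
qed

lemma totally_bounded_image_cball_in:
  assumes V: "subspace V" and T: "linear_on V T" and tb: "totally_bounded (T ` cball_in V 1)"
    and r: "r > 0"
  shows "totally_bounded (T ` cball_in V r)"
proof -
  have "T ` cball_in V r \<subseteq> (\<lambda>z. r *\<^sub>R z) ` T ` cball_in V 1"
  proof (rule image_subsetI)
    fix y assume y: "y \<in> cball_in V r"
    have "(1/r) *\<^sub>R y \<in> cball_in V 1"
      using y r subspace_scale[OF V] by (simp add: field_simps)
    moreover have "T y = r *\<^sub>R T ((1/r) *\<^sub>R y)" using T y r unfolding linear_on_def by simp
    ultimately show "T y \<in> (\<lambda>z. r *\<^sub>R z) ` T ` cball_in V 1" by blast
  qed
  moreover have "totally_bounded ((\<lambda>z. r *\<^sub>R z) ` T ` cball_in V 1)"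
    using totally_bounded_image_scaleR[OF tb, of r] by (simp add: image_image)
  ultimately show ?thesis by (rule Met_TC.mtotally_bounded_subset[rotated])
qed

lemma approximable_op_zero:
  assumes V: "subspace V"
  shows "approximable_op V (\<lambda>x. 0)"
proof -
  have "opnorm V (\<lambda>x. 0 - 0) \<le> 0" using subspace_0[OF V] by (intro opnorm_least) auto
  then show ?thesis unfolding approximable_op_def
    using bounded_op_zero[OF V] finite_rank_op_zero[OF V] by (auto intro!: exI[of _ "\<lambda>x. 0"])
qed

definition opdist :: "'a::real_normed_vector set \<Rightarrow> (('a \<Rightarrow> 'a) \<Rightarrow> bool) \<Rightarrow> ('a \<Rightarrow> 'a) \<Rightarrow> real" where
  "opdist V P T = Inf {opnorm V (\<lambda>x. T x - R x) | R. P R}"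

lemma quot_norm_eq_opdist: "quot_norm V T = opdist V (approximable_op V) T"
  unfolding quot_norm_def opdist_def ..

lemma opdist_le:
  assumes V: "subspace V" and T: "bounded_op V T" and P: "\<And>R. P R \<Longrightarrow> bounded_op V R" and "P R"
  shows "opdist V P T \<le> opnorm V (\<lambda>x. T x - R x)"
  unfolding opdist_def
proof (rule cInf_lower)
  show "opnorm V (\<lambda>x. T x - R x) \<in> {opnorm V (\<lambda>x. T x - R x) | R. P R}" using \<open>P R\<close> by blast
  show "bdd_below {opnorm V (\<lambda>x. T x - R x) | R. P R}"
    using opnorm_nonneg[OF bounded_op_diff[OF V T P] subspace_0[OF V]] by (intro bdd_belowI[of _ 0]) blast
qed

lemma opdist_greatest:
  assumes "P R\<^sub>0" and "\<And>R. P R \<Longrightarrow> m \<le> opnorm V (\<lambda>x. T x - R x)"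
  shows "m \<le> opdist V P T"
  unfolding opdist_def using assms by (intro cInf_greatest) auto

lemma opdist_lessE:
  assumes "P R\<^sub>0" and "opdist V P T < e"
  obtains R where "P R" "opnorm V (\<lambda>x. T x - R x) < e"
  using cInf_lessD[of "{opnorm V (\<lambda>x. T x - R x) | R. P R}" e] assms unfolding opdist_def by blast

lemma quot_norm_le_opnorm:
  assumes V: "subspace V" and T: "bounded_op V T"
  shows "quot_norm V T \<le> opnorm V T"
proof -
  have "quot_norm V T \<le> opnorm V (\<lambda>x. T x - 0)"
    unfolding quot_norm_eq_opdist
    by (rule opdist_le[where P = "approximable_op V", OF V T approximable_op_bounded
          approximable_op_zero[OF V]])
  then show ?thesis by simp
qed

section \<open>Normalised representatives of nonzero classes in \<open>\<K>/\<A>\<close>\<close>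

definition normalized_KA_witness :: "'a::real_normed_vector set \<Rightarrow> ('a \<Rightarrow> 'a) \<Rightarrow> bool" where
  "normalized_KA_witness V S \<longleftrightarrow> bounded_op V S \<and> (\<forall>y\<in>V. norm (S y) \<le> 2 * norm y) \<and>
     totally_bounded (S ` cball_in V 1) \<and> (\<forall>G. finite_rank_op V G \<longrightarrow> 1 \<le> opnorm V (\<lambda>y. S y - G y))"

lemma opdist_finite_rank_pos:
  assumes V: "subspace V" and T: "bounded_op V T" and "\<not> approximable_op V T"
  shows "0 < opdist V (finite_rank_op V) T"
proof -
  obtain e where "e > 0" "\<And>F. finite_rank_op V F \<Longrightarrow> e \<le> opnorm V (\<lambda>x. T x - F x)"
    using assms unfolding approximable_op_def by (meson not_less)
  then show ?thesis
    using opdist_greatest[where P = "finite_rank_op V", OF finite_rank_op_zero[OF V]]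
    by (meson less_le_trans)
qed

lemma opdist_finite_rank_rescaled:
  assumes V: "subspace V" and T: "bounded_op V T" and F: "finite_rank_op V F"
    and d: "d = opdist V (finite_rank_op V) T" "d > 0"
  shows "1 \<le> opdist V (finite_rank_op V) (\<lambda>y. (1/d) *\<^sub>R (T y - F y))"
proof (rule opdist_greatest[where P = "finite_rank_op V", OF finite_rank_op_zero[OF V]])
  fix G assume G: "finite_rank_op V G"
  let ?S = "\<lambda>y. (1/d) *\<^sub>R (T y - F y)"
  have SG: "bounded_op V (\<lambda>y. ?S y - G y)"
    by (intro bounded_op_diff bounded_op_scaleR V T finite_rank_op_bounded F G)
  have "d \<le> opnorm V (\<lambda>x. T x - (F x + d *\<^sub>R G x))"
    using opdist_le[where P = "finite_rank_op V", OF V T finite_rank_op_bounded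
        finite_rank_op_add[OF V F finite_rank_op_scaleR[OF V G, of d]]]
    by (simp only: d(1))
  also have "\<dots> \<le> d * opnorm V (\<lambda>y. ?S y - G y)"
  proof (rule opnorm_least)
    show "0 \<in> V" using V by (rule subspace_0)
    fix y assume y: "y \<in> V" "norm y \<le> 1"
    have "T y - (F y + d *\<^sub>R G y) = d *\<^sub>R (?S y - G y)"
      using d(2) by (simp add: algebra_simps)
    then show "norm (T y - (F y + d *\<^sub>R G y)) \<le> d * opnorm V (\<lambda>y. ?S y - G y)"
      using d(2) opnorm_upper[OF SG y] by (simp add: mult_left_mono)
  qed
  finally show "1 \<le> opnorm V (\<lambda>y. ?S y - G y)" using d(2) by simp
qed

lemma normalized_KA_witness_exists:
  fixes V :: "'a::banach set"
  assumes V: "subspace V" and "KA_nontrivial V"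
  shows "\<exists>S. normalized_KA_witness V S"
proof -
  obtain T where cT: "compact_op V T" and "\<not> approximable_op V T"
    using assms(2) unfolding KA_nontrivial_def by blast
  have T: "bounded_op V T" using cT unfolding compact_op_def by blast
  define d where "d = opdist V (finite_rank_op V) T"
  have d: "d > 0" unfolding d_def by (rule opdist_finite_rank_pos) fact+
  obtain F where F: "finite_rank_op V F" "opnorm V (\<lambda>x. T x - F x) < 2 * d"
    using opdist_lessE[where P = "finite_rank_op V", OF finite_rank_op_zero[OF V], of V T "2 * d"] d
    unfolding d_def by auto
  have TF: "bounded_op V (\<lambda>x. T x - F x)"
    by (rule bounded_op_diff[OF V T finite_rank_op_bounded[OF F(1)]])
  define S where "S y = (1/d) *\<^sub>R (T y - F y)" for y
  have S: "bounded_op V S" unfolding S_def by (rule bounded_op_scaleR[OF V TF])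
  have "norm (S y) \<le> 2 * norm y" if "y \<in> V" for y
  proof -
    have "norm (T y - F y) \<le> opnorm V (\<lambda>x. T x - F x) * norm y" by (rule norm_le_opnorm[OF V TF that])
    also have "\<dots> \<le> 2 * d * norm y" using F(2) by (intro mult_right_mono) auto
    finally have "norm (T y - F y) \<le> 2 * d * norm y" .
    moreover have "norm (S y) = norm (T y - F y) / d" unfolding S_def norm_scaleR using d by simp
    ultimately have "d * norm (S y) \<le> d * (2 * norm y)" using d by (simp add: field_simps)
    then show ?thesis using d by simp
  qed
  moreover have "totally_bounded (S ` cball_in V 1)"
  proof -
    have "totally_bounded (T ` cball_in V 1)"
      using cT totally_bounded_iff_compact_closure unfolding compact_op_def by blast
    then show ?thesis unfolding S_def
      by (intro totally_bounded_image_scaleR totally_bounded_image_diff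
          totally_bounded_finite_rank_image[OF F(1)])
  qed
  moreover have "1 \<le> opnorm V (\<lambda>y. S y - G y)" if "finite_rank_op V G" for G
    using opdist_finite_rank_rescaled[OF V T F(1) d_def d]
      opdist_le[where P = "finite_rank_op V", OF V S finite_rank_op_bounded that]
    unfolding S_def by linarith
  ultimately show ?thesis using S unfolding normalized_KA_witness_def by blast
qed

section \<open>\<open>\<ell>\<^sup>p\<close>-sums\<close>

lemma one_le_ereal_cases:
  assumes "1 \<le> (p::ereal)"
  obtains "p = \<infinity>" | q where "p = ereal q" "q \<ge> 1"
  using assms by (cases p) auto

lemma lp_sum_dominated:
  assumes p: "1 \<le> p" and g: "g \<in> lp_sum p Vs" and f: "\<And>n. f n \<in> Vs n" and k: "k \<ge> 0"
    and le: "\<And>n. norm (f n) \<le> k * norm (g n)"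
  shows "f \<in> lp_sum p Vs \<and> lp_sum_norm p f \<le> k * lp_sum_norm p g"
  using p
proof (cases rule: one_le_ereal_cases)
  case 1
  have g0: "(\<lambda>n. norm (g n)) \<longlonglongrightarrow> 0" using g 1 unfolding lp_sum_def by auto
  have "(\<lambda>n. k * norm (g n)) \<longlonglongrightarrow> 0" using tendsto_mult_right_zero[OF g0] by simp
  then have f0: "(\<lambda>n. norm (f n)) \<longlonglongrightarrow> 0"
    by (rule Lim_null_comparison[rotated]) (use le in auto)
  have bdd: "bdd_above (range (\<lambda>n. norm (g n)))"
    using g0 by (intro Bseq_bdd_above convergent_imp_Bseq convergentI)
  have "Sup (range (\<lambda>n. norm (f n))) \<le> k * Sup (range (\<lambda>n. norm (g n)))"
  proof (rule cSup_least)
    fix x assume "x \<in> range (\<lambda>n. norm (f n))"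
    then obtain n where "x = norm (f n)" by blast
    moreover have "k * norm (g n) \<le> k * Sup (range (\<lambda>n. norm (g n)))"
      using cSup_upper[OF rangeI bdd] k by (rule mult_left_mono)
    ultimately show "x \<le> k * Sup (range (\<lambda>n. norm (g n)))" using le[of n] by linarith
  qed simp
  then show ?thesis using f f0 1 unfolding lp_sum_def lp_sum_norm_def by simp
next
  case (2 q)
  have sg: "summable (\<lambda>n. norm (g n) powr q)" using g 2 unfolding lp_sum_def by auto
  have le_q: "norm (f n) powr q \<le> k powr q * norm (g n) powr q" for n
    using le[of n] 2 by (simp add: powr_mono2 flip: powr_mult)
  have sk: "summable (\<lambda>n. k powr q * norm (g n) powr q)" by (rule summable_mult[OF sg])
  have sf: "summable (\<lambda>n. norm (f n) powr q)"
    by (rule summable_comparison_test[OF _ sk]) (use le_q in auto)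
  have "(\<Sum>n. norm (f n) powr q) \<le> k powr q * (\<Sum>n. norm (g n) powr q)"
    using suminf_le[OF le_q sf sk] suminf_mult[OF sg] by simp
  then have "(\<Sum>n. norm (f n) powr q) powr (1/q) \<le> (k powr q * (\<Sum>n. norm (g n) powr q)) powr (1/q)"
    using 2 by (intro powr_mono2) (auto intro!: suminf_nonneg sf)
  also have "\<dots> = k * (\<Sum>n. norm (g n) powr q) powr (1/q)"
    using 2 k by (simp add: powr_mult powr_powr)
  finally show ?thesis using f sf 2 unfolding lp_sum_def lp_sum_norm_def by simp
qed

lemma norm_le_lp_sum_norm:
  assumes p: "1 \<le> p" and f: "f \<in> lp_sum p Vs"
  shows "norm (f n) \<le> lp_sum_norm p f"
  using p
proof (cases rule: one_le_ereal_cases)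
  case 1
  have "(\<lambda>n. norm (f n)) \<longlonglongrightarrow> 0" using f 1 unfolding lp_sum_def by auto
  then have "bdd_above (range (\<lambda>n. norm (f n)))"
    by (intro Bseq_bdd_above convergent_imp_Bseq convergentI)
  then show ?thesis unfolding lp_sum_norm_def using 1 by (simp add: cSup_upper)
next
  case (2 q)
  have "summable (\<lambda>n. norm (f n) powr q)" using f 2 unfolding lp_sum_def by auto
  from sum_le_suminf[OF this, of "{n}"] have "norm (f n) powr q \<le> (\<Sum>n. norm (f n) powr q)"
    by simp
  then have "(norm (f n) powr q) powr (1/q) \<le> (\<Sum>n. norm (f n) powr q) powr (1/q)"
    using 2 by (intro powr_mono2) auto
  then show ?thesis unfolding lp_sum_norm_def using 2 by (simp add: powr_powr)
qed

lemma lp_sum_single: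
  assumes p: "1 \<le> p" and zero: "\<And>m. 0 \<in> Vs m" and y: "y \<in> Vs n"
  shows "(\<lambda>_. 0)(n := y) \<in> lp_sum p Vs \<and> lp_sum_norm p ((\<lambda>_. 0)(n := y)) = norm y"
  using p
proof (cases rule: one_le_ereal_cases)
  case 1
  have "eventually (\<lambda>m. norm (((\<lambda>_. 0)(n := y)) m) = 0) sequentially"
    unfolding eventually_sequentially by (intro exI[of _ "Suc n"]) auto
  then have lim: "(\<lambda>m. norm (((\<lambda>_. 0)(n := y)) m)) \<longlonglongrightarrow> 0" by (rule tendsto_eventually)
  have "Sup (range (\<lambda>m. norm (((\<lambda>_. 0)(n := y)) m))) = norm y"
  proof (rule antisym)
    show "Sup (range (\<lambda>m. norm (((\<lambda>_. 0)(n := y)) m))) \<le> norm y" by (rule cSup_least) auto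
    have "bdd_above (range (\<lambda>m. norm (((\<lambda>_. 0)(n := y)) m)))"
      using lim by (intro Bseq_bdd_above convergent_imp_Bseq convergentI)
    from cSup_upper[OF rangeI this, of n]
    show "norm y \<le> Sup (range (\<lambda>m. norm (((\<lambda>_. 0)(n := y)) m)))" by simp
  qed
  then show ?thesis using lim zero y 1 unfolding lp_sum_def lp_sum_norm_def by auto
next
  case (2 q)
  have "(\<lambda>m. norm (((\<lambda>_. 0)(n := y)) m) powr q) = (\<lambda>m. if m = n then norm y powr q else 0)"
    by auto
  then have "(\<lambda>m. norm (((\<lambda>_. 0)(n := y)) m) powr q) sums (norm y powr q)"
    using sums_single[of n "\<lambda>_. norm y powr q"] by simp
  then show ?thesis using zero y 2 unfolding lp_sum_def lp_sum_norm_def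
    by (auto simp: sums_iff powr_powr)
qed

locale lp_sum_iso =
  fixes p :: ereal and Vs :: "nat \<Rightarrow> 'b::banach set" and U :: "'a::banach \<Rightarrow> nat \<Rightarrow> 'b"
    and c C :: real
  assumes p: "1 \<le> p" and subspace_Vs: "\<And>n. subspace (Vs n)" and lin_bij: "lin_bij_to_lp_sum p Vs U"
    and c_pos: "0 < c" and C_pos: "0 < C"
    and norm_lower: "\<And>x. c * norm x \<le> lp_sum_norm p (U x)"
    and norm_upper: "\<And>x. lp_sum_norm p (U x) \<le> C * norm x"
begin

definition W :: "(nat \<Rightarrow> 'b) \<Rightarrow> 'a" where
  "W = inv_into UNIV U"

lemma U_in_lp_sum: "U x \<in> lp_sum p Vs"
  using lin_bij unfolding lin_bij_to_lp_sum_def bij_betw_def by blast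

lemma U_in_Vs: "U x n \<in> Vs n"
  using U_in_lp_sum unfolding lp_sum_def by blast

lemma U_W: "f \<in> lp_sum p Vs \<Longrightarrow> U (W f) = f"
  using lin_bij unfolding lin_bij_to_lp_sum_def bij_betw_def W_def by (simp add: f_inv_into_f)

lemma W_U: "W (U x) = x"
  using lin_bij unfolding lin_bij_to_lp_sum_def bij_betw_def W_def by simp

lemma W_eqI: "U x = f \<Longrightarrow> W f = x"
  using W_U by blast

lemma U_add: "U (x + y) = (\<lambda>n. U x n + U y n)"
  using lin_bij unfolding lin_bij_to_lp_sum_def by simp

lemma U_scaleR: "U (r *\<^sub>R x) = (\<lambda>n. r *\<^sub>R U x n)"
  using lin_bij unfolding lin_bij_to_lp_sum_def by simp

lemma U_diff: "U (x - y) = (\<lambda>n. U x n - U y n)"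
  using U_add[of x "(-1) *\<^sub>R y"] U_scaleR[of "-1" y] by simp

lemma linear_U_coord: "linear (\<lambda>x. U x n)"
  by (rule linearI) (simp_all add: U_add U_scaleR)

lemma norm_U_coord_le: "norm (U x n) \<le> C * norm x"
  using norm_le_lp_sum_norm[OF p U_in_lp_sum] norm_upper order_trans by blast

lemma W_zero: "W (\<lambda>n. 0) = 0"
  using W_U[of 0] U_scaleR[of 0 0] by simp

lemma norm_W_le: "f \<in> lp_sum p Vs \<Longrightarrow> c * norm (W f) \<le> lp_sum_norm p f"
  using norm_lower[of "W f"] by (simp add: U_W)

definition embed :: "nat \<Rightarrow> 'b \<Rightarrow> 'a" where
  "embed n y = W ((\<lambda>_. 0)(n := y))"

lemma single_in_lp_sum:
  "y \<in> Vs n \<Longrightarrow> (\<lambda>_. 0)(n := y) \<in> lp_sum p Vs \<and> lp_sum_norm p ((\<lambda>_. 0)(n := y)) = norm y"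
  using lp_sum_single[OF p subspace_0[OF subspace_Vs]] .

lemma U_embed: "y \<in> Vs n \<Longrightarrow> U (embed n y) = (\<lambda>_. 0)(n := y)"
  unfolding embed_def using single_in_lp_sum by (simp add: U_W)

lemma norm_embed_le: "y \<in> Vs n \<Longrightarrow> c * norm (embed n y) \<le> norm y"
  unfolding embed_def using single_in_lp_sum norm_W_le by metis

lemma embed_add:
  assumes "y \<in> Vs n" "z \<in> Vs n"
  shows "embed n (y + z) = embed n y + embed n z"
  unfolding embed_def[of n "y + z"] by (rule W_eqI) (use assms in \<open>auto simp: U_add U_embed\<close>)

lemma embed_scaleR:
  assumes "y \<in> Vs n"
  shows "embed n (r *\<^sub>R y) = r *\<^sub>R embed n y"
  unfolding embed_def[of n "r *\<^sub>R y"] by (rule W_eqI) (use assms in \<open>auto simp: U_scaleR U_embed\<close>)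

lemma embed_diff:
  assumes "y \<in> Vs n" "z \<in> Vs n"
  shows "embed n (y - z) = embed n y - embed n z"
  using embed_add[OF assms(1) subspace_scale[OF subspace_Vs assms(2), of "-1"]]
    embed_scaleR[OF assms(2), of "-1"] by simp

lemma norm_compression_le:
  assumes S: "bounded_op UNIV S" and y: "y \<in> Vs n"
  shows "c * norm (U (S (embed n y)) n) \<le> C * opnorm UNIV S * norm y"
proof -
  have "norm (U (S (embed n y)) n) \<le> C * norm (S (embed n y))" by (rule norm_U_coord_le)
  also have "\<dots> \<le> C * (opnorm UNIV S * norm (embed n y))"
    using norm_le_opnorm[OF subspace_UNIV S] C_pos by (intro mult_left_mono) auto
  finally have "c * norm (U (S (embed n y)) n) \<le> c * (C * (opnorm UNIV S * norm (embed n y)))"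
    using c_pos by (intro mult_left_mono) auto
  also have "\<dots> = C * opnorm UNIV S * (c * norm (embed n y))" by (simp add: algebra_simps)
  also have "\<dots> \<le> C * opnorm UNIV S * norm y"
    using norm_embed_le[OF y] C_pos opnorm_nonneg[OF S] by (intro mult_left_mono) auto
  finally show ?thesis .
qed

lemma bounded_op_compression:
  assumes S: "bounded_op UNIV S"
  shows "bounded_op (Vs n) (\<lambda>y. U (S (embed n y)) n)"
  unfolding bounded_op_def
proof (intro conjI)
  have "linear_on UNIV S" using S unfolding bounded_op_def by blast
  then show "linear_on (Vs n) (\<lambda>y. U (S (embed n y)) n)"
    unfolding linear_on_def by (simp add: U_add U_scaleR embed_add embed_scaleR)
  show "(\<lambda>y. U (S (embed n y)) n) ` Vs n \<subseteq> Vs n" using U_in_Vs by blast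
  show "\<exists>K. \<forall>y\<in>Vs n. norm (U (S (embed n y)) n) \<le> K * norm y"
    using norm_compression_le[OF S] c_pos
    by (intro exI[of _ "C * opnorm UNIV S / c"]) (simp add: field_simps)
qed

lemma finite_rank_op_compression:
  assumes G: "finite_rank_op UNIV G"
  shows "finite_rank_op (Vs n) (\<lambda>y. U (G (embed n y)) n)"
proof -
  obtain B where B: "finite B" "G ` UNIV \<subseteq> span B" using G unfolding finite_rank_op_def by blast
  have "(\<lambda>y. U (G (embed n y)) n) ` Vs n \<subseteq> (\<lambda>z. U z n) ` span B" using B(2) by blast
  also have "\<dots> = span ((\<lambda>z. U z n) ` B)" by (rule span_linear_image[OF linear_U_coord, symmetric])
  finally show ?thesis
    using B(1) bounded_op_compression G unfolding finite_rank_op_def by blast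
qed

end

section \<open>Diagonal operators on an \<open>\<ell>\<^sup>p\<close>-sum\<close>

lemma abs_le_sup_norm:
  assumes "a \<in> c0"
  shows "\<bar>a n\<bar> \<le> sup_norm a"
proof -
  have "a \<longlonglongrightarrow> 0" using assms by (simp add: c0_def)
  then have "Bseq a" by (intro convergent_imp_Bseq convergentI)
  then have "bdd_above (range (\<lambda>n. norm (a n)))" by (rule Bseq_bdd_above')
  then show ?thesis unfolding sup_norm_def by (simp add: cSup_upper)
qed

lemma sup_norm_le: "(\<And>n. \<bar>a n\<bar> \<le> M) \<Longrightarrow> sup_norm a \<le> M"
  unfolding sup_norm_def by (intro cSup_least) auto

locale lp_sum_iso_KA = lp_sum_iso p Vs U c C
  for p and Vs :: "nat \<Rightarrow> 'b::banach set" and U :: "'a::banach \<Rightarrow> nat \<Rightarrow> 'b" and c C +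
  assumes KA_nontrivial_Vs: "\<And>n. KA_nontrivial (Vs n)"
begin

definition T :: "nat \<Rightarrow> 'b \<Rightarrow> 'b" where
  "T n = (SOME S. normalized_KA_witness (Vs n) S)"

lemma normalized_KA_witness_T: "normalized_KA_witness (Vs n) (T n)"
  unfolding T_def
  by (rule someI_ex[OF normalized_KA_witness_exists[OF subspace_Vs KA_nontrivial_Vs]])

lemma linear_on_T: "linear_on (Vs n) (T n)"
  using normalized_KA_witness_T unfolding normalized_KA_witness_def bounded_op_def by blast

lemma T_in_Vs: "y \<in> Vs n \<Longrightarrow> T n y \<in> Vs n"
  using normalized_KA_witness_T unfolding normalized_KA_witness_def bounded_op_def by blast

lemma norm_T_le: "y \<in> Vs n \<Longrightarrow> norm (T n y) \<le> 2 * norm y"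
  using normalized_KA_witness_T unfolding normalized_KA_witness_def by blast

lemma totally_bounded_T: "totally_bounded (T n ` cball_in (Vs n) 1)"
  using normalized_KA_witness_T unfolding normalized_KA_witness_def by blast

lemma T_far_from_finite_rank: "finite_rank_op (Vs n) G \<Longrightarrow> 1 \<le> opnorm (Vs n) (\<lambda>y. T n y - G y)"
  using normalized_KA_witness_T unfolding normalized_KA_witness_def by blast

definition diag :: "(nat \<Rightarrow> real) \<Rightarrow> 'a \<Rightarrow> 'a" where
  "diag a x = W (\<lambda>n. a n *\<^sub>R T n (U x n))"

lemma diag_seq_in_lp_sum:
  assumes a: "\<And>n. \<bar>a n\<bar> \<le> s"
  shows "(\<lambda>n. a n *\<^sub>R T n (U x n)) \<in> lp_sum p Vs \<and>
    lp_sum_norm p (\<lambda>n. a n *\<^sub>R T n (U x n)) \<le> 2 * s * lp_sum_norm p (U x)"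
proof (rule lp_sum_dominated[OF p U_in_lp_sum])
  have s: "0 \<le> s" using a[of 0] by linarith
  then show "0 \<le> 2 * s" by simp
  fix n
  show "a n *\<^sub>R T n (U x n) \<in> Vs n" by (rule subspace_scale[OF subspace_Vs T_in_Vs[OF U_in_Vs]])
  have "\<bar>a n\<bar> * norm (T n (U x n)) \<le> s * (2 * norm (U x n))"
    using a[of n] norm_T_le[OF U_in_Vs] s by (intro mult_mono) auto
  then show "norm (a n *\<^sub>R T n (U x n)) \<le> 2 * s * norm (U x n)" by simp
qed

lemma U_diag: "(\<And>n. \<bar>a n\<bar> \<le> s) \<Longrightarrow> U (diag a x) = (\<lambda>n. a n *\<^sub>R T n (U x n))"
  unfolding diag_def using diag_seq_in_lp_sum U_W by blast

lemma norm_diag_le: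
  assumes a: "\<And>n. \<bar>a n\<bar> \<le> s"
  shows "c * norm (diag a x) \<le> 2 * s * C * norm x"
proof -
  have "c * norm (diag a x) \<le> lp_sum_norm p (\<lambda>n. a n *\<^sub>R T n (U x n))"
    unfolding diag_def by (rule norm_W_le[OF conjunct1[OF diag_seq_in_lp_sum[of a s, OF a]]])
  also have "\<dots> \<le> 2 * s * lp_sum_norm p (U x)" using diag_seq_in_lp_sum[of a s, OF a] by blast
  also have "\<dots> \<le> 2 * s * (C * norm x)"
    using norm_upper a[of 0] by (intro mult_left_mono) auto
  finally show ?thesis by (simp add: mult.assoc)
qed

lemma diag_linear_combination:
  assumes "\<And>n. \<bar>a n\<bar> \<le> s" "\<And>n. \<bar>b n\<bar> \<le> t"
  shows "diag (\<lambda>n. \<alpha> * a n + \<beta> * b n) x = \<alpha> *\<^sub>R diag a x + \<beta> *\<^sub>R diag b x"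
  unfolding diag_def[of "\<lambda>n. \<alpha> * a n + \<beta> * b n"]
  by (rule W_eqI) (simp add: U_add U_scaleR U_diag[OF assms(1)] U_diag[OF assms(2)] scaleR_add_left)

lemma diag_zero: "diag (\<lambda>_. 0) x = 0"
  unfolding diag_def by (simp add: W_zero)

lemma diag_single: "diag ((\<lambda>_. 0)(N := r)) x = embed N (r *\<^sub>R T N (U x N))"
  unfolding diag_def embed_def by (rule arg_cong[of _ _ W]) (simp add: fun_eq_iff)

lemma bounded_op_diag:
  assumes a: "\<And>n. \<bar>a n\<bar> \<le> s"
  shows "bounded_op UNIV (diag a)"
  unfolding bounded_op_def linear_on_def
proof (intro conjI ballI allI)
  have T_add: "T n (U x n + U y n) = T n (U x n) + T n (U y n)" for n x y
    using linear_on_T U_in_Vs unfolding linear_on_def by blast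
  have T_scaleR: "T n (r *\<^sub>R U x n) = r *\<^sub>R T n (U x n)" for n r x
    using linear_on_T U_in_Vs unfolding linear_on_def by blast
  fix x y r
  show "diag a (x + y) = diag a x + diag a y"
    unfolding diag_def[of a "x + y"]
    by (rule W_eqI) (simp add: U_add U_diag[of a s, OF a] T_add scaleR_add_right)
  show "diag a (r *\<^sub>R x) = r *\<^sub>R diag a x"
    unfolding diag_def[of a "r *\<^sub>R x"]
    by (rule W_eqI) (simp add: U_scaleR U_diag[of a s, OF a] T_scaleR mult.commute)
next
  show "diag a ` UNIV \<subseteq> UNIV" by simp
  show "\<exists>K. \<forall>x\<in>UNIV. norm (diag a x) \<le> K * norm x"
    using norm_diag_le[of a s, OF a] c_pos by (intro exI[of _ "2 * s * C / c"]) (simp add: field_simps)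
qed

lemma totally_bounded_diag_single: "totally_bounded (diag ((\<lambda>_. 0)(N := r)) ` cball_in UNIV 1)"
proof -
  have "totally_bounded (T N ` cball_in (Vs N) C)"
    by (rule totally_bounded_image_cball_in[OF subspace_Vs linear_on_T totally_bounded_T C_pos])
  then have "totally_bounded ((\<lambda>y. embed N (r *\<^sub>R y)) ` T N ` cball_in (Vs N) C)"
  proof (rule totally_bounded_Lipschitz_image[of _ _ "\<bar>r\<bar> / c"])
    fix y z assume "y \<in> T N ` cball_in (Vs N) C" "z \<in> T N ` cball_in (Vs N) C"
    then have yz: "r *\<^sub>R y \<in> Vs N" "r *\<^sub>R z \<in> Vs N" "r *\<^sub>R (y - z) \<in> Vs N"
      using T_in_Vs subspace_scale[OF subspace_Vs] subspace_diff[OF subspace_Vs] by auto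
    have "c * dist (embed N (r *\<^sub>R y)) (embed N (r *\<^sub>R z)) = c * norm (embed N (r *\<^sub>R (y - z)))"
      by (simp add: dist_norm embed_diff[OF yz(1,2)] scaleR_diff_right)
    also have "\<dots> \<le> \<bar>r\<bar> * dist y z" using norm_embed_le[OF yz(3)] by (simp add: dist_norm)
    finally show "dist (embed N (r *\<^sub>R y)) (embed N (r *\<^sub>R z)) \<le> \<bar>r\<bar> / c * dist y z"
      using c_pos by (simp add: field_simps)
  qed
  moreover have "diag ((\<lambda>_. 0)(N := r)) ` cball_in UNIV 1 \<subseteq>
      (\<lambda>y. embed N (r *\<^sub>R y)) ` T N ` cball_in (Vs N) C"
  proof (rule image_subsetI)
    fix x :: 'a assume "x \<in> cball_in UNIV 1"
    then have "C * norm x \<le> C" using C_pos by (simp add: mult_left_le)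
    then have "U x N \<in> cball_in (Vs N) C" using norm_U_coord_le[of x N] U_in_Vs by auto
    then show "diag ((\<lambda>_. 0)(N := r)) x \<in> (\<lambda>y. embed N (r *\<^sub>R y)) ` T N ` cball_in (Vs N) C"
      unfolding diag_single by blast
  qed
  ultimately show ?thesis by (rule Met_TC.mtotally_bounded_subset)
qed

lemma totally_bounded_diag_truncation:
  assumes a: "\<And>n. \<bar>a n\<bar> \<le> s"
  shows "totally_bounded (diag (\<lambda>n. if n < N then a n else 0) ` cball_in UNIV 1)"
proof (induction N)
  case 0
  show ?case by (rule Met_TC.mtotally_bounded_subset[of "{0}"]) (auto simp: diag_zero)
next
  case (Suc N)
  let ?a = "\<lambda>n. if n < N then a n else 0"
  have s: "0 \<le> s" using a[of 0] by linarith
  have "(\<lambda>n. if n < Suc N then a n else 0) = (\<lambda>n. 1 * ?a n + 1 * ((\<lambda>_. 0)(N := a N)) n)"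
    by (auto simp: fun_eq_iff)
  moreover have "\<bar>?a n\<bar> \<le> s" "\<bar>((\<lambda>_. 0)(N := a N)) n\<bar> \<le> s" for n using a s by simp_all
  ultimately have "diag (\<lambda>n. if n < Suc N then a n else 0) x = diag ?a x + diag ((\<lambda>_. 0)(N := a N)) x"
    for x using diag_linear_combination[of ?a s "(\<lambda>_. 0)(N := a N)" s 1 1 x] by simp
  then show ?case using totally_bounded_image_add[OF Suc.IH totally_bounded_diag_single] by simp
qed

lemma compact_op_diag:
  assumes "a \<in> c0"
  shows "compact_op UNIV (diag a)"
proof -
  have bnd: "\<And>n. \<bar>a n\<bar> \<le> sup_norm a" using abs_le_sup_norm[OF assms] .
  have "totally_bounded (diag a ` cball_in UNIV 1)"
  proof (rule totally_bounded_uniform_limit)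
    fix e :: real assume "e > 0"
    define \<epsilon> where "\<epsilon> = e * c / (4 * C)"
    have "\<epsilon> > 0" using \<open>e > 0\<close> c_pos C_pos by (simp add: \<epsilon>_def)
    moreover have "a \<longlonglongrightarrow> 0" using assms by (simp add: c0_def)
    ultimately obtain N where N: "\<forall>n\<ge>N. norm (a n - 0) < \<epsilon>" using LIMSEQ_D by blast
    let ?head = "\<lambda>n. if n < N then a n else 0" and ?tail = "\<lambda>n. if n < N then 0 else a n"
    have head: "\<bar>?head n\<bar> \<le> sup_norm a" and tail: "\<bar>?tail n\<bar> \<le> \<epsilon>" for n
      using bnd[of n] bnd[of 0] N \<open>\<epsilon> > 0\<close> by (auto simp: not_less)
    have "dist (diag a x) (diag ?head x) < e" if "x \<in> cball_in UNIV 1" for x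
    proof -
      have "a = (\<lambda>n. 1 * ?head n + 1 * ?tail n)" by (simp add: fun_eq_iff)
      then have "diag a x = diag ?head x + diag ?tail x"
        using diag_linear_combination[of ?head "sup_norm a" ?tail \<epsilon> 1 1 x, OF head tail] by simp
      then have "c * dist (diag a x) (diag ?head x) = c * norm (diag ?tail x)" by (simp add: dist_norm)
      also have "\<dots> \<le> 2 * \<epsilon> * C * norm x" by (rule norm_diag_le[OF tail])
      also have "\<dots> \<le> 2 * \<epsilon> * C" using that \<open>\<epsilon> > 0\<close> C_pos by (simp add: mult_left_le)
      also have "\<dots> < c * e" using \<open>e > 0\<close> c_pos C_pos by (simp add: \<epsilon>_def field_simps)
      finally show ?thesis using c_pos by simp
    qed
    then show "\<exists>g. totally_bounded (g ` cball_in UNIV 1) \<and> (\<forall>x\<in>cball_in UNIV 1. dist (diag a x) (g x) < e)"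
      using totally_bounded_diag_truncation[of a "sup_norm a", OF bnd] by blast
  qed
  then show ?thesis
    unfolding compact_op_def using bounded_op_diag[of a "sup_norm a", OF bnd] totally_bounded_iff_compact_closure by blast
qed

lemma coeff_le_opnorm_diff_finite_rank:
  assumes a: "\<And>m. \<bar>a m\<bar> \<le> s" and G: "finite_rank_op UNIV G"
  shows "c * \<bar>a n\<bar> \<le> C * opnorm UNIV (\<lambda>x. diag a x - G x)"
proof -
  let ?X = "opnorm UNIV (\<lambda>x. diag a x - G x)"
  have DG: "bounded_op UNIV (\<lambda>x. diag a x - G x)"
    by (rule bounded_op_diff[OF subspace_UNIV bounded_op_diag[of a s, OF a] finite_rank_op_bounded[OF G]])
  have X: "0 \<le> ?X" using opnorm_nonneg[OF DG] by simp
  show ?thesis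
  proof (cases "a n = 0")
    case True
    then show ?thesis using X C_pos by simp
  next
    case False
    \<comment> \<open>compressing to the \<open>n\<close>-th summand turns \<open>diag a\<close> into \<open>a n *\<^sub>R T n\<close>
      and keeps \<open>G\<close> of finite rank\<close>
    let ?H = "\<lambda>y. (1 / a n) *\<^sub>R U (G (embed n y)) n"
    have "1 \<le> opnorm (Vs n) (\<lambda>y. T n y - ?H y)"
      by (rule T_far_from_finite_rank[OF finite_rank_op_scaleR[OF subspace_Vs finite_rank_op_compression[OF G]]])
    also have "\<dots> \<le> C * ?X / (c * \<bar>a n\<bar>)"
    proof (rule opnorm_least)
      show "0 \<in> Vs n" by (rule subspace_0[OF subspace_Vs])
      fix y assume y: "y \<in> Vs n" "norm y \<le> 1"
      have "U (diag a (embed n y)) n = a n *\<^sub>R T n y" by (simp add: U_diag[of a s, OF a] U_embed[OF y(1)])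
      then have "T n y - ?H y = (1 / a n) *\<^sub>R U (diag a (embed n y) - G (embed n y)) n"
        using False by (simp add: U_diff scaleR_diff_right)
      then have "c * \<bar>a n\<bar> * norm (T n y - ?H y) = c * norm (U (diag a (embed n y) - G (embed n y)) n)"
        using False by simp
      also have "\<dots> \<le> C * ?X * norm y" by (rule norm_compression_le[OF DG y(1)])
      also have "\<dots> \<le> C * ?X" using y(2) X C_pos by (simp add: mult_left_le)
      finally show "norm (T n y - ?H y) \<le> C * ?X / (c * \<bar>a n\<bar>)"
        using False c_pos by (simp add: field_simps)
    qed
    finally show ?thesis using False c_pos by (simp add: field_simps)
  qed
qed

lemma coeff_le_opnorm_diff_approximable:
  assumes a: "\<And>m. \<bar>a m\<bar> \<le> s" and R: "approximable_op UNIV R"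
  shows "c * \<bar>a n\<bar> \<le> C * opnorm UNIV (\<lambda>x. diag a x - R x)"
proof (rule field_le_epsilon)
  fix e :: real assume "e > 0"
  then obtain G where G: "finite_rank_op UNIV G" "opnorm UNIV (\<lambda>x. R x - G x) < e / C"
    using R C_pos unfolding approximable_op_def by (meson divide_pos_pos)
  have "c * \<bar>a n\<bar> \<le> C * opnorm UNIV (\<lambda>x. diag a x - G x)"
    by (rule coeff_le_opnorm_diff_finite_rank[OF a G(1)])
  also have "\<dots> \<le> C * (opnorm UNIV (\<lambda>x. diag a x - R x) + opnorm UNIV (\<lambda>x. R x - G x))"
    using opnorm_diff_triangle[OF subspace_UNIV bounded_op_diag[of a s, OF a] approximable_op_bounded[OF R]
        finite_rank_op_bounded[OF G(1)]] C_pos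
    by (intro mult_left_mono) auto
  also have "\<dots> < C * opnorm UNIV (\<lambda>x. diag a x - R x) + e"
    using G(2) C_pos by (simp add: distrib_left field_simps)
  finally show "c * \<bar>a n\<bar> \<le> C * opnorm UNIV (\<lambda>x. diag a x - R x) + e" by simp
qed

lemma quot_norm_diag_ge:
  assumes "a \<in> c0"
  shows "c / C * sup_norm a \<le> quot_norm UNIV (diag a)"
  unfolding quot_norm_eq_opdist
proof (rule opdist_greatest[where P = "approximable_op UNIV", OF approximable_op_zero[OF subspace_UNIV]])
  fix R :: "'a \<Rightarrow> 'a" assume "approximable_op UNIV R"
  then have "\<bar>a n\<bar> \<le> C / c * opnorm UNIV (\<lambda>x. diag a x - R x)" for n
    using coeff_le_opnorm_diff_approximable[OF abs_le_sup_norm[OF assms]] c_pos by (simp add: field_simps)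
  then have "sup_norm a \<le> C / c * opnorm UNIV (\<lambda>x. diag a x - R x)" by (rule sup_norm_le)
  then show "c / C * sup_norm a \<le> opnorm UNIV (\<lambda>x. diag a x - R x)"
    using c_pos C_pos by (simp add: field_simps)
qed

lemma quot_norm_diag_le:
  assumes "a \<in> c0"
  shows "quot_norm UNIV (diag a) \<le> 2 * C / c * sup_norm a"
proof -
  have bnd: "\<And>n. \<bar>a n\<bar> \<le> sup_norm a" using abs_le_sup_norm[OF assms] .
  have "quot_norm UNIV (diag a) \<le> opnorm UNIV (diag a)"
    by (rule quot_norm_le_opnorm[OF subspace_UNIV bounded_op_diag[of a "sup_norm a", OF bnd]])
  also have "\<dots> \<le> 2 * C / c * sup_norm a"
  proof (rule opnorm_least)
    fix x :: 'a assume "norm x \<le> 1"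
    have "c * norm (diag a x) \<le> 2 * sup_norm a * C * norm x"
      by (rule norm_diag_le[of a "sup_norm a", OF bnd])
    also have "\<dots> \<le> 2 * sup_norm a * C"
      using \<open>norm x \<le> 1\<close> bnd[of 0] C_pos by (intro mult_left_le) auto
    finally show "norm (diag a x) \<le> 2 * C / c * sup_norm a" using c_pos by (simp add: field_simps)
  qed simp
  finally show ?thesis .
qed

lemma diag_linear_modulo_approximable:
  assumes a: "a \<in> c0" and b: "b \<in> c0"
  shows "approximable_op UNIV (\<lambda>x. diag (\<lambda>n. \<alpha> * a n + \<beta> * b n) x - (\<alpha> *\<^sub>R diag a x + \<beta> *\<^sub>R diag b x))"
proof -
  have "(\<lambda>x. diag (\<lambda>n. \<alpha> * a n + \<beta> * b n) x - (\<alpha> *\<^sub>R diag a x + \<beta> *\<^sub>R diag b x)) = (\<lambda>x. 0)"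
    using diag_linear_combination[of a "sup_norm a" b "sup_norm b",
        OF abs_le_sup_norm[OF a] abs_le_sup_norm[OF b]] by simp
  then show ?thesis using approximable_op_zero[OF subspace_UNIV] by simp
qed

theorem KA_contains_c0_UNIV: "KA_contains_c0 (UNIV :: 'a set)"
  unfolding KA_contains_c0_def
  by (rule exI[of _ diag], rule exI[of _ "c / C"], rule exI[of _ "2 * C / c"])
    (use c_pos C_pos compact_op_diag diag_linear_modulo_approximable quot_norm_diag_ge quot_norm_diag_le
      in auto)

end

lemma isometric_imp_isomorphic_to_lp_sum:
  assumes "isometric_to_lp_sum TYPE('a::real_normed_vector) p Xs"
  shows "isomorphic_to_lp_sum TYPE('a) p Xs"
proof -
  obtain U :: "'a \<Rightarrow> nat \<Rightarrow> 'b" where "lin_bij_to_lp_sum p Xs U" "\<And>x. lp_sum_norm p (U x) = norm x"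
    using assms unfolding isometric_to_lp_sum_def by blast
  then show ?thesis unfolding isomorphic_to_lp_sum_def
    by (intro exI[of _ U] exI[of _ "1::real"]) auto
qed

lemma KA_contains_c0_if_isomorphic_to_lp_sum:
  fixes Xs :: "nat \<Rightarrow> 'b::banach set"
  assumes p: "1 \<le> p" and Xs: "\<And>n. subspace (Xs n)" "\<And>n. KA_nontrivial (Xs n)"
    and "isomorphic_to_lp_sum TYPE('a::banach) p Xs"
  shows "KA_contains_c0 (UNIV :: 'a set)"
proof -
  obtain U :: "'a \<Rightarrow> nat \<Rightarrow> 'b" and c C
    where U: "lin_bij_to_lp_sum p Xs U" "0 < c"
      "\<And>x. c * norm x \<le> lp_sum_norm p (U x)" "\<And>x. lp_sum_norm p (U x) \<le> C * norm x"
    using assms(4) unfolding isomorphic_to_lp_sum_def by blast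
  have "lp_sum_norm p (U x) \<le> max C 1 * norm x" for x
    using U(4)[of x] by (metis max.cobounded1 mult_right_mono norm_ge_zero order_trans)
  then interpret lp_sum_iso_KA p Xs U c "max C 1"
    by unfold_locales (use p Xs U in auto)
  show ?thesis by (rule KA_contains_c0_UNIV)
qed

theorem corollary2p3:
  fixes p :: ereal
  assumes p: "1 \<le> p"
  assumes hyp:
    "(\<exists>Xs :: nat \<Rightarrow> 'b::banach set.
        (\<forall>n. subspace (Xs n) \<and> closed (Xs n) \<and> KA_nontrivial (Xs n)) \<and>
        isometric_to_lp_sum TYPE('a::banach) p Xs)
     \<or> (KA_nontrivial (UNIV :: 'a set) \<and>
        isomorphic_to_lp_sum TYPE('a) p (\<lambda>n. UNIV :: 'a set))"
  shows "KA_contains_c0 (UNIV :: 'a set)"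
  using hyp
proof (elim disjE exE conjE)
  fix Xs :: "nat \<Rightarrow> 'b set"
  assume "\<forall>n. subspace (Xs n) \<and> closed (Xs n) \<and> KA_nontrivial (Xs n)"
    and "isometric_to_lp_sum TYPE('a) p Xs"
  then show ?thesis
    by (intro KA_contains_c0_if_isomorphic_to_lp_sum[OF p] isometric_imp_isomorphic_to_lp_sum) auto
next
  assume "KA_nontrivial (UNIV :: 'a set)" and "isomorphic_to_lp_sum TYPE('a) p (\<lambda>n. UNIV :: 'a set)"
  then show ?thesis by (intro KA_contains_c0_if_isomorphic_to_lp_sum[OF p]) auto
qed

end
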